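(* Let $G=(V,E)$ be a connected undirected graph with labeled nodes $1,\dots,n_l$ ($1\le n_l<n$) and edge costs $d_e>0$. For every $\lambda\ge0$ and every unlabeled node $p$, the flow-based prediction weights satisfy $w_i(p)\ge0$ for all $i=1,\dots,n_l$ and $\sum_{i=1}^{n_l}w_i(p)=1$. Consequently the prediction $f(p)=\sum_i w_i(p)f(i)$ lies in $[\min_i f(i),\max_i f(i)]$ (maximum principle).
   Context: Orient each edge arbitrarily; let $A$ be the $n\times m$ signed incidence matrix ($A_{ie}=+1$, $A_{je}=-1$ for $e$ oriented from $i$ to $j$), $A_l$ its rows $1,\dots,n_l$ and $A_u$ its remaining rows. For unlabeled $p$, $\vec b_p\in\mathbb R^{n-n_l}$ is zero except $-1$ at the entry of $p$. For $\lambda\ge0$, $\vec x$ is the unique minimizer of $\frac12\sum_{e=1}^m d_e(x_e^2+\lambda|x_e|)$ subject to $A_u\vec x=\vec b_p$, and $\vec w(p)=A_l\vec x$. *)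

theory Defs
  imports Main Complex_Main
begin

text \<open>Graph on vertices 0..<n (paper's node k corresponds to k-1), edges indexed 0..<m,
  edge e oriented from src e to dst e.\<close>

definition valid_graph :: "nat \<Rightarrow> nat \<Rightarrow> (nat \<Rightarrow> nat) \<Rightarrow> (nat \<Rightarrow> nat) \<Rightarrow> bool" where
  "valid_graph n m src dst \<longleftrightarrow> (\<forall>e<m. src e < n \<and> dst e < n \<and> src e \<noteq> dst e)"

definition adj_rel :: "nat \<Rightarrow> (nat \<Rightarrow> nat) \<Rightarrow> (nat \<Rightarrow> nat) \<Rightarrow> (nat \<times> nat) set" where
  "adj_rel m src dst = {(src e, dst e) | e. e < m} \<union> {(dst e, src e) | e. e < m}"

definition graph_connected :: "nat \<Rightarrow> nat \<Rightarrow> (nat \<Rightarrow> nat) \<Rightarrow> (nat \<Rightarrow> nat) \<Rightarrow> bool" where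
  "graph_connected n m src dst \<longleftrightarrow> (\<forall>u<n. \<forall>v<n. (u, v) \<in> (adj_rel m src dst)\<^sup>*)"

definition incidence :: "(nat \<Rightarrow> nat) \<Rightarrow> (nat \<Rightarrow> nat) \<Rightarrow> nat \<Rightarrow> nat \<Rightarrow> real" where
  "incidence src dst i e = (if i = src e then 1 else if i = dst e then -1 else 0)"

definition flow_objective :: "nat \<Rightarrow> (nat \<Rightarrow> real) \<Rightarrow> real \<Rightarrow> (nat \<Rightarrow> real) \<Rightarrow> real" where
  "flow_objective m d lam x = (1/2) * (\<Sum>e<m. d e * ((x e)\<^sup>2 + lam * \<bar>x e\<bar>))"

text \<open>Constraint A_u x = b_p: rows of unlabeled nodes nl..<n.\<close>
definition flow_feasible :: "nat \<Rightarrow> nat \<Rightarrow> nat \<Rightarrow> (nat \<Rightarrow> nat) \<Rightarrow> (nat \<Rightarrow> nat) \<Rightarrow> nat \<Rightarrow> (nat \<Rightarrow> real) \<Rightarrow> bool" where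
  "flow_feasible n nl m src dst p x \<longleftrightarrow>
     (\<forall>q. nl \<le> q \<and> q < n \<longrightarrow> (\<Sum>e<m. incidence src dst q e * x e) = (if q = p then -1 else 0))"

definition flow_minimizer :: "nat \<Rightarrow> nat \<Rightarrow> nat \<Rightarrow> (nat \<Rightarrow> nat) \<Rightarrow> (nat \<Rightarrow> nat) \<Rightarrow> (nat \<Rightarrow> real) \<Rightarrow> real \<Rightarrow> nat \<Rightarrow> (nat \<Rightarrow> real) \<Rightarrow> bool" where
  "flow_minimizer n nl m src dst d lam p x \<longleftrightarrow>
     flow_feasible n nl m src dst p x \<and>
     (\<forall>y. flow_feasible n nl m src dst p y \<longrightarrow> flow_objective m d lam x \<le> flow_objective m d lam y)"

definition flow_weight :: "nat \<Rightarrow> (nat \<Rightarrow> nat) \<Rightarrow> (nat \<Rightarrow> nat) \<Rightarrow> (nat \<Rightarrow> real) \<Rightarrow> nat \<Rightarrow> real" where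
  "flow_weight m src dst x i = (\<Sum>e<m. incidence src dst i e * x e)"

end

theory Submission imports Defs begin

text \<open>Suppose the weight of a labeled node i were negative, and let R be the set of nodes from
  which i can be reached along edges in the direction of positive flow. No flow leaves R, so the
  net outflow of R is nonnegative; the unlabeled nodes contribute at most 0 and i contributes
  something negative, so R contains another labeled node j. Pushing a little flow back along a
  j-to-i flow path keeps the flow feasible (labeled nodes are unconstrained) and strictly lowers
  every cost term it touches, contradicting optimality. The weights sum to 1 because the columns
  of the incidence matrix sum to 0 and the unlabeled rows of A x sum to -1.\<close>

definition flow_graph :: "nat \<Rightarrow> (nat \<Rightarrow> nat) \<Rightarrow> (nat \<Rightarrow> nat) \<Rightarrow> (nat \<Rightarrow> real) \<Rightarrow> (nat \<times> nat) set" where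
  "flow_graph m src dst x =
     {(a, b). \<exists>e<m. (src e = a \<and> dst e = b \<and> x e > 0) \<or> (dst e = a \<and> src e = b \<and> x e < 0)}"

definition conformal :: "nat \<Rightarrow> (nat \<Rightarrow> real) \<Rightarrow> (nat \<Rightarrow> real) \<Rightarrow> bool" where
  "conformal m c x \<longleftrightarrow> (\<forall>e<m. (c e > 0 \<longrightarrow> x e > 0) \<and> (c e < 0 \<longrightarrow> x e < 0))"

lemma valid_graph_edgeD:
  assumes "valid_graph n m src dst" "e < m"
  shows "src e < n" "dst e < n" "src e \<noteq> dst e"
  using assms unfolding valid_graph_def by auto

lemma sum_incidence:
  assumes "finite R" "src e \<noteq> dst e"
  shows "(\<Sum>u\<in>R. incidence src dst u e) = of_bool (src e \<in> R) - of_bool (dst e \<in> R)"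
proof -
  have "incidence src dst u e = of_bool (u = src e) - of_bool (u = dst e)" for u
    using assms(2) unfolding incidence_def by auto
  then show ?thesis
    using assms(1) by (simp add: sum_subtractf)
qed

lemma sum_flow_weight:
  assumes "valid_graph n m src dst" "finite R"
  shows "(\<Sum>u\<in>R. flow_weight m src dst x u)
       = (\<Sum>e<m. x e * (of_bool (src e \<in> R) - of_bool (dst e \<in> R)))"
proof -
  have "(\<Sum>u\<in>R. flow_weight m src dst x u) = (\<Sum>e<m. x e * (\<Sum>u\<in>R. incidence src dst u e))"
    unfolding flow_weight_def by (subst sum.swap) (simp add: sum_distrib_left mult.commute)
  also have "\<dots> = (\<Sum>e<m. x e * (of_bool (src e \<in> R) - of_bool (dst e \<in> R)))"
    using assms by (intro sum.cong refl) (simp add: sum_incidence valid_graph_edgeD)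
  finally show ?thesis .
qed

lemma sum_flow_weight_all_vertices:
  assumes "valid_graph n m src dst"
  shows "(\<Sum>u<n. flow_weight m src dst x u) = 0"
  using sum_flow_weight[OF assms, of "{..<n}" x] valid_graph_edgeD[OF assms] by simp

lemma sum_flow_weight_nonneg_if_closed:
  assumes "valid_graph n m src dst" "finite R"
    and closed: "\<And>a b. (a, b) \<in> flow_graph m src dst x \<Longrightarrow> b \<in> R \<Longrightarrow> a \<in> R"
  shows "(\<Sum>u\<in>R. flow_weight m src dst x u) \<ge> 0"
  unfolding sum_flow_weight[OF assms(1,2)]
proof (rule sum_nonneg)
  fix e assume "e \<in> {..<m}"
  then have "src e \<in> R \<and> dst e \<notin> R \<longrightarrow> \<not> x e < 0" "dst e \<in> R \<and> src e \<notin> R \<longrightarrow> \<not> x e > 0"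
    using closed unfolding flow_graph_def by blast+
  then show "0 \<le> x e * (of_bool (src e \<in> R) - of_bool (dst e \<in> R))"
    by (cases "src e \<in> R"; cases "dst e \<in> R") auto
qed

text \<open>Applied to any flow c, flow_weight is its net outflow at each vertex.\<close>

lemma unit_path_flow:
  assumes vg: "valid_graph n m src dst"
    and "(u, v) \<in> (flow_graph m src dst x)\<^sup>*"
  shows "\<exists>c. conformal m c x
           \<and> (\<forall>q. flow_weight m src dst c q = of_bool (q = u) - of_bool (q = v))"
  using assms(2)
proof (induction rule: converse_rtrancl_induct)
  case base
  show ?case by (rule exI[of _ "\<lambda>_. 0"]) (simp add: conformal_def flow_weight_def)
next
  case (step a w)
  then obtain c where c: "conformal m c x"
    and div_c: "\<forall>q. flow_weight m src dst c q = of_bool (q = w) - of_bool (q = v)" by blast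
  from step(1) obtain e where e: "e < m"
    and dir: "(src e = a \<and> dst e = w \<and> x e > 0) \<or> (dst e = a \<and> src e = w \<and> x e < 0)"
    unfolding flow_graph_def by blast
  define s :: real where "s = (if x e > 0 then 1 else -1)"
  define c' where "c' = c(e := c e + s)"
  have "flow_weight m src dst c' q = of_bool (q = a) - of_bool (q = v)" for q
  proof -
    have "flow_weight m src dst c' q = flow_weight m src dst c q + incidence src dst q e * s"
      using e unfolding flow_weight_def c'_def
      by (simp add: sum.remove[of "{..<m}" e] distrib_left)
    also have "incidence src dst q e * s = of_bool (q = a) - of_bool (q = w)"
      using dir valid_graph_edgeD(3)[OF vg e] unfolding s_def incidence_def by auto
    finally show ?thesis using div_c by simp
  qed
  moreover have "conformal m c' x"
    using c dir e unfolding conformal_def c'_def s_def by auto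
  ultimately show ?case by blast
qed

lemma edge_cost_mono:
  fixes y z lam :: real
  assumes "lam \<ge> 0" "\<bar>y\<bar> \<le> \<bar>z\<bar>"
  shows "y\<^sup>2 + lam * \<bar>y\<bar> \<le> z\<^sup>2 + lam * \<bar>z\<bar>"
  using assms by (metis add_mono abs_ge_zero abs_le_square_iff mult_left_mono)

lemma edge_cost_strict_mono:
  fixes y z lam :: real
  assumes "lam \<ge> 0" "\<bar>y\<bar> < \<bar>z\<bar>"
  shows "y\<^sup>2 + lam * \<bar>y\<bar> < z\<^sup>2 + lam * \<bar>z\<bar>"
proof -
  have "\<bar>y\<bar>\<^sup>2 < \<bar>z\<bar>\<^sup>2" using assms(2) by (intro power_strict_mono) auto
  then have "y\<^sup>2 < z\<^sup>2" by simp
  moreover have "lam * \<bar>y\<bar> \<le> lam * \<bar>z\<bar>" using assms by (simp add: mult_left_mono)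
  ultimately show ?thesis by linarith
qed

lemma abs_diff_conformal:
  fixes x c eps :: real
  assumes "c > 0 \<longrightarrow> x > 0" "c < 0 \<longrightarrow> x < 0" "eps \<ge> 0" "eps * \<bar>c\<bar> \<le> \<bar>x\<bar>"
  shows "\<bar>x - eps * c\<bar> = \<bar>x\<bar> - eps * \<bar>c\<bar>"
  using assms by (cases "c > 0"; cases "c < 0") (auto simp: abs_if mult_less_0_iff)

text \<open>The step size is the largest one for which no edge of the path has its flow reversed.\<close>

lemma flow_objective_conformal_decrease:
  assumes d: "\<forall>e<m. d e > 0" and lam: "lam \<ge> 0"
    and c: "conformal m c x" and e0: "e0 < m" "c e0 \<noteq> 0"
  shows "\<exists>eps>0. flow_objective m d lam (\<lambda>e. x e - eps * c e) < flow_objective m d lam x"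
proof -
  define S where "S = {e. e < m \<and> c e \<noteq> 0}"
  define eps where "eps = Min ((\<lambda>e. \<bar>x e\<bar> / \<bar>c e\<bar>) ` S)"
  define cost where "cost y = y\<^sup>2 + lam * \<bar>y\<bar>" for y :: real
  have fin: "finite S" and "e0 \<in> S" using e0 unfolding S_def by auto
  have "\<bar>x e\<bar> / \<bar>c e\<bar> > 0" if "e \<in> S" for e
  proof -
    have "c e \<noteq> 0" "x e \<noteq> 0" using that c unfolding S_def conformal_def by (auto simp: neq_iff)
    then show ?thesis by simp
  qed
  then have eps_pos: "eps > 0"
    unfolding eps_def using fin \<open>e0 \<in> S\<close> by (subst Min_gr_iff) auto
  have eps_le: "eps * \<bar>c e\<bar> \<le> \<bar>x e\<bar>" if "e < m" for e
  proof (cases "c e = 0")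
    case False
    then have "eps \<le> \<bar>x e\<bar> / \<bar>c e\<bar>" unfolding eps_def using fin that by (simp add: S_def)
    then show ?thesis using False by (simp add: field_simps)
  qed simp
  have abs_new: "\<bar>x e - eps * c e\<bar> = \<bar>x e\<bar> - eps * \<bar>c e\<bar>" if "e < m" for e
    using abs_diff_conformal[OF _ _ _ eps_le[OF that]] c that eps_pos unfolding conformal_def
    by simp
  have "d e * cost (x e - eps * c e) \<le> d e * cost (x e)" if "e < m" for e
    using d that abs_new[OF that] eps_pos lam unfolding cost_def
    by (intro mult_left_mono edge_cost_mono) auto
  moreover have "d e0 * cost (x e0 - eps * c e0) < d e0 * cost (x e0)"
    using d e0 abs_new[OF e0(1)] eps_pos lam unfolding cost_def
    by (intro mult_strict_left_mono edge_cost_strict_mono) auto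
  ultimately have "(\<Sum>e<m. d e * cost (x e - eps * c e)) < (\<Sum>e<m. d e * cost (x e))"
    using e0 by (intro sum_strict_mono_ex1) auto
  then show ?thesis
    using eps_pos unfolding flow_objective_def cost_def by auto
qed

lemma flow_weight_unlabeled:
  assumes "flow_feasible n nl m src dst p x" "nl \<le> q" "q < n"
  shows "flow_weight m src dst x q = (if q = p then -1 else 0)"
  using assms unfolding flow_feasible_def flow_weight_def by blast

lemma flow_feasible_diff:
  assumes "flow_feasible n nl m src dst p x"
    and "\<And>q. nl \<le> q \<Longrightarrow> q < n \<Longrightarrow> flow_weight m src dst c q = 0"
  shows "flow_feasible n nl m src dst p (\<lambda>e. x e - eps * c e)"
proof -
  have "flow_weight m src dst (\<lambda>e. x e - eps * c e) q
      = flow_weight m src dst x q - eps * flow_weight m src dst c q" for q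
    unfolding flow_weight_def
    by (simp add: right_diff_distrib sum_subtractf sum_distrib_left mult.left_commute)
  then show ?thesis
    using assms unfolding flow_feasible_def by (simp add: flow_weight_def)
qed

lemma minimizer_no_flow_path_between_labeled:
  assumes vg: "valid_graph n m src dst"
    and d: "\<forall>e<m. d e > 0" and lam: "lam \<ge> 0"
    and opt: "flow_minimizer n nl m src dst d lam p x"
    and ij: "i < nl" "j < nl" "j \<noteq> i"
  shows "(j, i) \<notin> (flow_graph m src dst x)\<^sup>*"
proof
  assume "(j, i) \<in> (flow_graph m src dst x)\<^sup>*"
  from unit_path_flow[OF vg this] obtain c where c: "conformal m c x"
    and div_c: "\<forall>q. flow_weight m src dst c q = of_bool (q = j) - of_bool (q = i)" by blast
  have "\<exists>e0<m. c e0 \<noteq> 0"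
  proof (rule ccontr)
    assume "\<not> ?thesis"
    then have "flow_weight m src dst c j = 0" unfolding flow_weight_def by simp
    then show False using div_c ij by simp
  qed
  then obtain e0 where e0: "e0 < m" "c e0 \<noteq> 0" by blast
  obtain eps where less: "flow_objective m d lam (\<lambda>e. x e - eps * c e) < flow_objective m d lam x"
    using flow_objective_conformal_decrease[OF d lam c e0] by blast
  have "flow_feasible n nl m src dst p (\<lambda>e. x e - eps * c e)"
    using opt div_c ij by (intro flow_feasible_diff) (auto simp: flow_minimizer_def)
  with opt less show False unfolding flow_minimizer_def by fastforce
qed

lemma flow_weight_nonneg:
  assumes vg: "valid_graph n m src dst"
    and d: "\<forall>e<m. d e > 0" and lam: "lam \<ge> 0"
    and nl: "nl < n"
    and opt: "flow_minimizer n nl m src dst d lam p x"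
    and i: "i < nl"
  shows "flow_weight m src dst x i \<ge> 0"
proof (rule ccontr)
  assume neg: "\<not> flow_weight m src dst x i \<ge> 0"
  let ?w = "flow_weight m src dst x"
  have feas: "flow_feasible n nl m src dst p x" using opt unfolding flow_minimizer_def by blast
  define R where "R = {u. u < n \<and> (u, i) \<in> (flow_graph m src dst x)\<^sup>*}"
  have "finite R" and "i \<in> R" unfolding R_def using i nl by auto
  have "a \<in> R" if "(a, b) \<in> flow_graph m src dst x" "b \<in> R" for a b
  proof -
    have "a < n" using that(1) valid_graph_edgeD[OF vg] unfolding flow_graph_def by auto
    moreover have "(a, i) \<in> (flow_graph m src dst x)\<^sup>*"
      using that unfolding R_def by (auto intro: converse_rtrancl_into_rtrancl)
    ultimately show ?thesis unfolding R_def by simp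
  qed
  then have outflow: "(\<Sum>u\<in>R. ?w u) \<ge> 0"
    using sum_flow_weight_nonneg_if_closed[OF vg \<open>finite R\<close>] by blast
  have "\<exists>j\<in>R. j < nl \<and> j \<noteq> i"
  proof (rule ccontr)
    assume none: "\<not> ?thesis"
    have "?w u \<le> 0" if "u \<in> R - {i}" for u
    proof -
      have "u < n" using that unfolding R_def by auto
      moreover have "nl \<le> u" using that none unfolding R_def by (cases "u < nl") auto
      ultimately show ?thesis using flow_weight_unlabeled[OF feas] by simp
    qed
    then have "(\<Sum>u\<in>R - {i}. ?w u) \<le> 0" by (rule sum_nonpos)
    then show False
      using outflow neg \<open>finite R\<close> \<open>i \<in> R\<close> by (simp add: sum.remove)
  qed
  then show False
    using minimizer_no_flow_path_between_labeled[OF vg d lam opt i] unfolding R_def by blast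
qed

lemma flow_weight_sum_labeled:
  assumes vg: "valid_graph n m src dst" and nl: "nl < n"
    and p: "nl \<le> p" "p < n"
    and feas: "flow_feasible n nl m src dst p x"
  shows "(\<Sum>i<nl. flow_weight m src dst x i) = 1"
proof -
  have split: "{..<n} = {..<nl} \<union> {nl..<n}" using nl by auto
  have "(\<Sum>i<n. flow_weight m src dst x i)
      = (\<Sum>i<nl. flow_weight m src dst x i) + (\<Sum>i\<in>{nl..<n}. flow_weight m src dst x i)"
    unfolding split by (rule sum.union_disjoint) auto
  moreover have "(\<Sum>i\<in>{nl..<n}. flow_weight m src dst x i) = (\<Sum>i\<in>{nl..<n}. if i = p then -1 else 0)"
    using flow_weight_unlabeled[OF feas] by (intro sum.cong) auto
  ultimately show ?thesis
    using sum_flow_weight_all_vertices[OF vg, of x] p by simp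
qed

lemma convex_combination_in_Min_Max:
  fixes w f :: "'a \<Rightarrow> real"
  assumes "finite I" "I \<noteq> {}" "\<forall>i\<in>I. w i \<ge> 0" "(\<Sum>i\<in>I. w i) = 1"
  shows "(\<Sum>i\<in>I. w i * f i) \<in> {Min (f ` I) .. Max (f ` I)}"
proof -
  have "(\<Sum>i\<in>I. w i * Min (f ` I)) \<le> (\<Sum>i\<in>I. w i * f i)"
    using assms by (intro sum_mono mult_left_mono) auto
  moreover have "(\<Sum>i\<in>I. w i * f i) \<le> (\<Sum>i\<in>I. w i * Max (f ` I))"
    using assms by (intro sum_mono mult_left_mono) auto
  ultimately show ?thesis
    using assms(4) by (simp add: sum_distrib_right[symmetric])
qed

theorem proposition4:
  fixes n nl m :: nat and src dst :: "nat \<Rightarrow> nat" and d :: "nat \<Rightarrow> real"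
    and lam :: real and p :: nat and x :: "nat \<Rightarrow> real"
  assumes "valid_graph n m src dst"
    and "graph_connected n m src dst"
    and "1 \<le> nl" and "nl < n"
    and "\<forall>e<m. d e > 0"
    and "lam \<ge> 0"
    and "nl \<le> p" and "p < n"
    and "flow_minimizer n nl m src dst d lam p x"
  shows "(\<forall>i<nl. flow_weight m src dst x i \<ge> 0)
       \<and> (\<Sum>i<nl. flow_weight m src dst x i) = 1
       \<and> (\<forall>f :: nat \<Rightarrow> real.
            (\<Sum>i<nl. flow_weight m src dst x i * f i) \<in> {Min (f ` {..<nl}) .. Max (f ` {..<nl})})"
proof -
  have nonneg: "\<forall>i<nl. flow_weight m src dst x i \<ge> 0"
    using flow_weight_nonneg[OF assms(1,5,6,4,9)] by blast
  have sum_one: "(\<Sum>i<nl. flow_weight m src dst x i) = 1"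
    using flow_weight_sum_labeled[OF assms(1,4,7,8)] assms(9) unfolding flow_minimizer_def by blast
  have "{..<nl} \<noteq> {}" using assms(3) by (simp add: lessThan_empty_iff)
  then show ?thesis
    using nonneg sum_one convex_combination_in_Min_Max[of "{..<nl}"] by auto
qed

end
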